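(* Let $n \ge 1$ and $1 \le k \le n$ be integers, and let $D_n^{2\times k}$ be the graph obtained from two disjoint copies $K_{n,1}$ and $K_{n,2}$ of the complete graph $K_n$ by adding $k$ distinct edges $e_1,\dots,e_k$, each of the form $e_i=(v_{i,1},v_{i,2})$ with $v_{i,1}$ a vertex of $K_{n,1}$ and $v_{i,2}$ a vertex of $K_{n,2}$. Then $D_n^{2\times k}$ has $2n$ vertices and $$\frac{2}{3(2n-1)} \le \lambda_2(D_n^{2\times k}) \le \frac{2k}{n}.$$
   Context: All graphs are finite, simple and unweighted. For a graph $G$ with adjacency matrix $A$ and diagonal degree matrix $D$, the graph Laplacian is $L_G = D - A$, with eigenvalues ordered $0=\lambda_1 \le \lambda_2 \le \dots$; $\lambda_2(G)$ denotes the second smallest eigenvalue of $L_G$. *)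

theory Defs
  imports "Jordan_Normal_Form.Char_Poly" "HOL-Library.Multiset"
begin

text \<open>Simple graphs on the vertex set {0..<N}, given by a symmetric irreflexive
  adjacency relation. The Laplacian L = D - A as an N x N real matrix.\<close>

definition laplacian :: "nat \<Rightarrow> (nat \<Rightarrow> nat \<Rightarrow> bool) \<Rightarrow> real mat" where
  "laplacian N E = mat N N (\<lambda>(i,j).
     if i = j then real (card {v \<in> {0..<N}. E i v})
     else (if E i j then -1 else 0))"

text \<open>Eigenvalues of a real matrix counted with algebraic multiplicity (real roots of the
  characteristic polynomial), sorted increasingly; for a symmetric matrix all roots are real.\<close>
definition sorted_eigenvalues :: "real mat \<Rightarrow> real list" where
  "sorted_eigenvalues M = sorted_list_of_multiset (proots (char_poly M))"

definition lambda2 :: "nat \<Rightarrow> (nat \<Rightarrow> nat \<Rightarrow> bool) \<Rightarrow> real" where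
  "lambda2 N E = sorted_eigenvalues (laplacian N E) ! 1"

text \<open>D_n^{2 x k}: vertices {0..<2n}; first copy of K_n on {0..<n}, second on {n..<2n};
  plus the set F of added edges (a,b) with a in the first copy and b in the second.\<close>
definition D_vertices :: "nat \<Rightarrow> nat set" where
  "D_vertices n = {0..<2*n}"

definition D_adj :: "nat \<Rightarrow> (nat \<times> nat) set \<Rightarrow> nat \<Rightarrow> nat \<Rightarrow> bool" where
  "D_adj n F u v \<longleftrightarrow>
     (u < n \<and> v < n \<and> u \<noteq> v)
   \<or> (n \<le> u \<and> u < 2*n \<and> n \<le> v \<and> v < 2*n \<and> u \<noteq> v)
   \<or> (u, v) \<in> F \<or> (v, u) \<in> F"

end

theory Submission
  imports Defs "Jordan_Normal_Form.Schur_Decomposition"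
begin

text \<open>The Laplacian \<open>L\<close> is real symmetric, so it has an orthonormal eigenbasis, and
  \<open>lambda\<^sub>2\<close> is controlled by the Rayleigh quotient \<open>y \<bullet> L y / y \<bullet> y\<close>: it is at least
  \<open>c\<close> if the quotient is at least \<open>c\<close> on the hyperplane orthogonal to the all-ones vector, and
  at most \<open>t\<close> if the quotient is at most \<open>t\<close> on some plane.

  For the upper bound take the plane spanned by the all-ones vector and the vector that is
  \<open>1\<close> on the first clique and \<open>-1\<close> on the second: only the \<open>k\<close> bridge edges contribute, so
  \<open>y \<bullet> L y = 4 k b\<^sup>2 \<le> (2 k / n) (y \<bullet> y)\<close>.

  For the lower bound let \<open>\<Sum> y\<^sub>i = 0\<close>, so that \<open>\<Sum>\<^sub>i\<^sub>,\<^sub>j (y\<^sub>i - y\<^sub>j)\<^sup>2 = 4 n (y \<bullet> y)\<close>.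
  Pairs inside a clique are edges, and a pair \<open>(i, j)\<close> across the cliques is routed through one
  bridge edge \<open>(p, q)\<close>: \<open>(y\<^sub>i - y\<^sub>j)\<^sup>2 \<le> 3 ((y\<^sub>i - y\<^sub>p)\<^sup>2 + (y\<^sub>p - y\<^sub>q)\<^sup>2 + (y\<^sub>q - y\<^sub>j)\<^sup>2)\<close>.
  Summing gives \<open>\<Sum>\<^sub>i\<^sub>,\<^sub>j (y\<^sub>i - y\<^sub>j)\<^sup>2 \<le> 6 n (2 n - 1) (y \<bullet> L y)\<close>.\<close>

section \<open>Spectral theorem for real symmetric matrices\<close>

lemma symmetric_mat_entry:
  assumes "A \<in> carrier_mat n n" "transpose_mat A = A" "i < n" "j < n"
  shows "A $$ (i, j) = A $$ (j, i)"
  using assms by (metis carrier_matD index_transpose_mat(1))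

text \<open>For an eigenvector \<open>v\<close> of the complexified matrix, the Hermitian form \<open>v\<^sup>* A v\<close>
  equals \<open>a |v|\<^sup>2\<close>, and it is real because \<open>A\<close> is real symmetric.\<close>
lemma eigenvalue_of_real_symmetric_is_real:
  fixes A :: "real mat" and a :: complex
  assumes A: "A \<in> carrier_mat n n" and sym: "transpose_mat A = A"
    and ev: "eigenvalue (of_real_hom.mat_hom A) a"
  shows "Im a = 0"
proof -
  obtain v where v: "v \<in> carrier_vec n" "v \<noteq> 0\<^sub>v n" "of_real_hom.mat_hom A *\<^sub>v v = a \<cdot>\<^sub>v v"
    using ev A unfolding eigenvalue_def eigenvector_def by auto
  define s where "s = (\<Sum>i<n. \<Sum>j<n. cnj (v$i) * complex_of_real (A $$ (i,j)) * v$j)"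
  define r where "r = (\<Sum>i<n. (cmod (v$i))\<^sup>2)"
  have row: "(\<Sum>j<n. complex_of_real (A $$ (i,j)) * v$j) = a * v$i" if "i < n" for i
  proof -
    have "(of_real_hom.mat_hom A *\<^sub>v v) $ i = (a \<cdot>\<^sub>v v) $ i" using v(3) by simp
    thus ?thesis using that A v(1) by (auto simp: scalar_prod_def lessThan_atLeast0)
  qed
  have "s = (\<Sum>i<n. cnj (v$i) * (\<Sum>j<n. complex_of_real (A $$ (i,j)) * v$j))"
    unfolding s_def by (simp add: sum_distrib_left mult.assoc)
  also have "\<dots> = (\<Sum>i<n. a * (v$i * cnj (v$i)))"
    by (rule sum.cong[OF refl]) (simp only: lessThan_iff row, simp add: mult_ac)
  also have "\<dots> = a * complex_of_real r"
    unfolding r_def by (simp add: sum_distrib_left complex_mult_cnj cmod_power2 sum.distrib distrib_left)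
  finally have s_eq: "s = a * complex_of_real r" .
  have "cnj s = (\<Sum>i<n. \<Sum>j<n. cnj (v$j) * complex_of_real (A $$ (j,i)) * v$i)"
    unfolding s_def cnj_sum
  proof (intro sum.cong refl)
    fix i j assume "i \<in> {..<n}" "j \<in> {..<n}"
    thus "cnj (cnj (v$i) * complex_of_real (A $$ (i,j)) * v$j)
        = cnj (v$j) * complex_of_real (A $$ (j,i)) * v$i"
      using symmetric_mat_entry[OF A sym, of i j] by (simp add: mult_ac)
  qed
  also have "\<dots> = s" unfolding s_def by (rule sum.swap)
  finally have "s \<in> \<real>" by (simp only: Reals_cnj_iff)
  moreover have "r > 0"
  proof -
    obtain i where "i < n" "v $ i \<noteq> 0"
      using v(1,2) by (metis carrier_vecD eq_vecI index_zero_vec)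
    hence "0 < (cmod (v$i))\<^sup>2" "(cmod (v$i))\<^sup>2 \<le> r"
      unfolding r_def by (auto intro: member_le_sum)
    thus ?thesis by linarith
  qed
  ultimately show ?thesis using s_eq by (simp add: complex_is_Real_iff)
qed

interpretation of_real_poly_hom: map_poly_inj_idom_hom "of_real :: real \<Rightarrow> complex" ..

lemma char_poly_symmetric_splits:
  fixes A :: "real mat"
  assumes A: "A \<in> carrier_mat n n" and sym: "transpose_mat A = A"
  obtains es where "char_poly A = (\<Prod>a\<leftarrow>es. [:-a, 1:])"
proof -
  let ?C = "of_real_hom.mat_hom A :: complex mat"
  obtain as where as: "char_poly ?C = (\<Prod>a\<leftarrow>as. [:-a, 1:])"
    using char_poly_factorized[of ?C n] A by auto
  have real: "complex_of_real (Re a) = a" if "a \<in> set as" for a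
  proof -
    have "poly (char_poly ?C) a = 0"
      unfolding as using that by (simp add: poly_prod_list prod_list_zero_iff)
    hence "eigenvalue ?C a" using eigenvalue_root_char_poly[of ?C n] A by simp
    thus ?thesis using eigenvalue_of_real_symmetric_is_real[OF A sym] by (simp add: complex_eq_iff)
  qed
  have "map_poly complex_of_real (char_poly A) = (\<Prod>a\<leftarrow>as. [:-a, 1:])"
    using of_real_hom.char_poly_hom[OF A] as by metis
  also have "\<dots> = (\<Prod>a\<leftarrow>map Re as. [:- complex_of_real a, 1:])"
    using real by (simp add: o_def) (metis (no_types, lifting) map_cong)
  also have "\<dots> = map_poly complex_of_real (\<Prod>a\<leftarrow>map Re as. [:-a, 1:])"
    by (induction as) (simp_all add: of_real_poly_hom.hom_mult del: mult_pCons_left mult_pCons_right)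
  finally show ?thesis using that of_real_poly_hom.injectivity by blast
qed

definition mat_trace :: "'a::comm_semiring_0 mat \<Rightarrow> 'a" where
  "mat_trace M = (\<Sum>i<dim_row M. M $$ (i, i))"

lemma mat_trace_mult:
  assumes "X \<in> carrier_mat n m" "Y \<in> carrier_mat m n"
  shows "mat_trace (X * Y) = (\<Sum>i<n. \<Sum>j<m. X $$ (i, j) * Y $$ (j, i))"
  using assms unfolding mat_trace_def by (auto intro!: sum.cong simp: scalar_prod_def lessThan_atLeast0)

lemma mat_trace_mult_comm:
  assumes "X \<in> carrier_mat n m" "Y \<in> carrier_mat m n"
  shows "mat_trace (X * Y) = mat_trace (Y * X)"
  unfolding mat_trace_mult[OF assms] mat_trace_mult[OF assms(2,1)]
  by (subst sum.swap) (simp add: mult.commute)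

lemma mat_trace_similar:
  assumes "similar_mat A B"
  shows "mat_trace A = mat_trace B"
proof -
  obtain n P Q where PQ: "{A, B, P, Q} \<subseteq> carrier_mat n n" "Q * P = 1\<^sub>m n" "A = P * B * Q"
    using similar_matD[OF assms] by blast
  hence "mat_trace A = mat_trace (P * (B * Q))" by (simp add: assoc_mult_mat[of P n n B n Q n])
  also have "\<dots> = mat_trace (B * Q * P)"
    using PQ(1) mat_trace_mult_comm[of P n n "B * Q"] by auto
  also have "B * Q * P = B"
    using PQ by (simp add: assoc_mult_mat[of B n n Q n P n] right_mult_one_mat[of B n n])
  finally show ?thesis .
qed

lemma mat_trace_square_symmetric:
  fixes B :: "real mat"
  assumes "B \<in> carrier_mat n n" "transpose_mat B = B"
  shows "mat_trace (B * B) = (\<Sum>i<n. \<Sum>j<n. (B $$ (i, j))\<^sup>2)"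
  unfolding mat_trace_mult[OF assms(1,1)] using symmetric_mat_entry[OF assms]
  by (simp add: power2_eq_square)

lemma mat_trace_square_strictly_upper_triangular:
  assumes T: "T \<in> carrier_mat n n" "upper_triangular T" and diag: "\<And>i. i < n \<Longrightarrow> T $$ (i, i) = 0"
  shows "mat_trace (T * T) = 0"
proof -
  have "T $$ (i, j) * T $$ (j, i) = 0" if "i < n" "j < n" for i j
    using that T diag by (cases i j rule: linorder_cases) (auto simp: upper_triangularD)
  thus ?thesis unfolding mat_trace_mult[OF T(1) T(1)] by simp
qed

text \<open>A symmetric matrix is similar to a triangular one (Schur) whose diagonal holds its
  eigenvalues; if these all vanish, \<open>\<Sum> B\<^sub>i\<^sub>j\<^sup>2 = tr (B\<^sup>2) = tr (T\<^sup>2) = 0\<close>.\<close>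
lemma symmetric_zero_spectrum_imp_zero:
  fixes B :: "real mat"
  assumes B: "B \<in> carrier_mat n n" and sym: "transpose_mat B = B"
    and spec: "\<And>e. eigenvalue B e \<Longrightarrow> e = 0"
  shows "B = 0\<^sub>m n n"
proof -
  obtain es where es: "char_poly B = (\<Prod>a\<leftarrow>es. [:-a, 1:])"
    using char_poly_symmetric_splits[OF B sym] .
  define T where "T = schur_upper_triangular B es"
  have T: "T \<in> carrier_mat n n" "upper_triangular T" "similar_mat B T"
    using schur_upper_triangular[OF B es] unfolding T_def by auto
  have "T $$ (i, i) = 0" if "i < n" for i
  proof -
    have "T $$ (i, i) \<in> set (diag_mat T)" using that T(1) unfolding diag_mat_def by auto
    hence "poly (char_poly T) (T $$ (i, i)) = 0"
      unfolding char_poly_upper_triangular[OF T(1,2)] by (simp add: poly_prod_list prod_list_zero_iff)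
    hence "eigenvalue B (T $$ (i, i))"
      using eigenvalue_root_char_poly[OF B] char_poly_similar[OF T(3)] by simp
    thus ?thesis by (rule spec)
  qed
  moreover have mat_trace_square_similar: "mat_trace (B * B) = mat_trace (T * T)"
  proof -
    obtain P Q where "similar_mat_wit B T P Q" using T(3) unfolding similar_mat_def by blast
    hence "similar_mat (B ^\<^sub>m 2) (T ^\<^sub>m 2)"
      unfolding similar_mat_def using similar_mat_wit_pow by blast
    hence "mat_trace (B ^\<^sub>m 2) = mat_trace (T ^\<^sub>m 2)" by (rule mat_trace_similar)
    thus ?thesis using B T(1) by (simp add: numeral_2_eq_2)
  qed
  ultimately have "(\<Sum>i<n. \<Sum>j<n. (B $$ (i, j))\<^sup>2) = 0"
    using mat_trace_square_strictly_upper_triangular[OF T(1,2)] mat_trace_square_similar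
      mat_trace_square_symmetric[OF B sym] by simp
  hence "B $$ (i, j) = 0" if "i < n" "j < n" for i j
    using that by (simp add: sum_nonneg_eq_0_iff sum_nonneg)
  thus ?thesis using B by (intro eq_matI) auto
qed

lemma scalar_prod_self_pos:
  fixes x :: "real vec"
  assumes "x \<in> carrier_vec n" "x \<noteq> 0\<^sub>v n"
  shows "0 < x \<bullet> x"
  using conjugate_square_greater_0_vec[OF assms(1)] assms(2) by simp

definition orthonormal_vecs :: "nat \<Rightarrow> real vec list \<Rightarrow> bool" where
  "orthonormal_vecs n us \<longleftrightarrow> set us \<subseteq> carrier_vec n \<and>
     (\<forall>i<length us. \<forall>j<length us. us ! i \<bullet> us ! j = (if i = j then 1 else 0))"

lemma orthonormal_vecs_carrier:
  "orthonormal_vecs n us \<Longrightarrow> k < length us \<Longrightarrow> us ! k \<in> carrier_vec n"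
  unfolding orthonormal_vecs_def by auto

lemma orthonormal_vecs_nth:
  "orthonormal_vecs n us \<Longrightarrow> i < length us \<Longrightarrow> j < length us \<Longrightarrow>
   us ! i \<bullet> us ! j = (if i = j then 1 else 0)"
  unfolding orthonormal_vecs_def by auto

lemma orthonormal_vecs_snoc:
  assumes us: "orthonormal_vecs n us" and x: "x \<in> carrier_vec n" "x \<bullet> x = 1"
    and orth: "\<forall>u\<in>set us. u \<bullet> x = 0"
  shows "orthonormal_vecs n (us @ [x])"
proof -
  have "(us @ [x]) ! i \<bullet> (us @ [x]) ! j = (if i = j then 1 else 0)"
    if "i < Suc (length us)" "j < Suc (length us)" for i j
  proof (cases "i < length us"; cases "j < length us")
    assume "\<not> i < length us" "j < length us"
    thus ?thesis using that orth orthonormal_vecs_carrier[OF us] comm_scalar_prod[OF x(1)]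
      by (auto simp: nth_append)
  qed (use that us x orth in \<open>auto simp: nth_append orthonormal_vecs_nth\<close>)
  thus ?thesis using us x unfolding orthonormal_vecs_def by auto
qed

definition orth_compl_proj :: "nat \<Rightarrow> real vec list \<Rightarrow> real mat" where
  "orth_compl_proj n us =
     mat n n (\<lambda>(i, j). (if i = j then 1 else 0) - (\<Sum>l<length us. us ! l $ i * us ! l $ j))"

lemma orth_compl_proj_carrier [simp]:
  "orth_compl_proj n us \<in> carrier_mat n n"
  "dim_row (orth_compl_proj n us) = n" "dim_col (orth_compl_proj n us) = n"
  unfolding orth_compl_proj_def by simp_all

lemma transpose_orth_compl_proj: "transpose_mat (orth_compl_proj n us) = orth_compl_proj n us"
  by (rule eq_matI) (auto simp: orth_compl_proj_def mult.commute)

lemma orth_compl_proj_mult_vec: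
  assumes x: "x \<in> carrier_vec n" and us: "set us \<subseteq> carrier_vec n"
  shows "orth_compl_proj n us *\<^sub>v x = vec n (\<lambda>i. x $ i - (\<Sum>l<length us. (us ! l \<bullet> x) * us ! l $ i))"
proof (rule eq_vecI)
  fix i assume "i < dim_vec (vec n (\<lambda>i. x $ i - (\<Sum>l<length us. (us ! l \<bullet> x) * us ! l $ i)))"
  hence i: "i < n" by simp
  have dim: "dim_vec (us ! l) = n" if "l < length us" for l
    using us that by (meson carrier_vecD nth_mem subsetD)
  have "(orth_compl_proj n us *\<^sub>v x) $ i
      = (\<Sum>j<n. ((if i = j then 1 else 0) - (\<Sum>l<length us. us ! l $ i * us ! l $ j)) * x $ j)"
    using i x by (simp add: orth_compl_proj_def scalar_prod_def lessThan_atLeast0)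
  also have "\<dots> = (\<Sum>j<n. (if i = j then 1 else 0) * x $ j)
      - (\<Sum>j<n. \<Sum>l<length us. us ! l $ i * us ! l $ j * x $ j)"
    by (simp add: left_diff_distrib sum_subtractf sum_distrib_right)
  also have "(\<Sum>j<n. (if i = j then 1 else 0) * x $ j) = x $ i"
    using i by (simp add: of_bool_def[symmetric] sum.delta)
  also have "(\<Sum>j<n. \<Sum>l<length us. us ! l $ i * us ! l $ j * x $ j)
      = (\<Sum>l<length us. (us ! l \<bullet> x) * us ! l $ i)"
    by (subst sum.swap) (auto intro!: sum.cong simp: scalar_prod_def dim carrier_vecD[OF x]
        sum_distrib_left sum_distrib_right lessThan_atLeast0 mult_ac)
  finally show "(orth_compl_proj n us *\<^sub>v x) $ i
      = vec n (\<lambda>i. x $ i - (\<Sum>l<length us. (us ! l \<bullet> x) * us ! l $ i)) $ i"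
    using i by simp
qed (simp add: orth_compl_proj_def)

lemma orth_compl_proj_orthogonal:
  assumes us: "orthonormal_vecs n us" and x: "x \<in> carrier_vec n" and u: "u \<in> set us"
  shows "u \<bullet> (orth_compl_proj n us *\<^sub>v x) = 0"
proof -
  obtain k where k: "k < length us" and u_k: "u = us ! k" using u by (auto simp: in_set_conv_nth)
  let ?c = "\<lambda>l. us ! l \<bullet> x"
  have carr: "set us \<subseteq> carrier_vec n" using us unfolding orthonormal_vecs_def by simp
  have dim: "dim_vec (us ! l) = n" if "l < length us" for l
    using orthonormal_vecs_carrier[OF us that] by simp
  have "(orth_compl_proj n us *\<^sub>v x) \<bullet> us ! k
      = (\<Sum>i<n. (x $ i - (\<Sum>l<length us. ?c l * us ! l $ i)) * us ! k $ i)"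
    unfolding orth_compl_proj_mult_vec[OF x carr] by (simp add: scalar_prod_def dim[OF k] lessThan_atLeast0)
  also have "\<dots> = (\<Sum>i<n. x $ i * us ! k $ i) - (\<Sum>l<length us. ?c l * (\<Sum>i<n. us ! l $ i * us ! k $ i))"
  proof -
    have "(\<Sum>i<n. (\<Sum>l<length us. ?c l * us ! l $ i) * us ! k $ i)
        = (\<Sum>i<n. \<Sum>l<length us. ?c l * (us ! l $ i * us ! k $ i))"
      by (intro sum.cong refl) (simp add: sum_distrib_left mult_ac)
    also have "\<dots> = (\<Sum>l<length us. ?c l * (\<Sum>i<n. us ! l $ i * us ! k $ i))"
      by (subst sum.swap) (simp add: sum_distrib_left)
    finally show ?thesis by (simp add: left_diff_distrib sum_subtractf)
  qed
  also have "(\<Sum>i<n. x $ i * us ! k $ i) = ?c k"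
    using x dim[OF k] by (simp add: scalar_prod_def lessThan_atLeast0 mult_ac)
  also have "(\<Sum>l<length us. ?c l * (\<Sum>i<n. us ! l $ i * us ! k $ i))
      = (\<Sum>l<length us. ?c l * (if l = k then 1 else 0))"
  proof (intro sum.cong refl)
    fix l assume "l \<in> {..<length us}"
    thus "?c l * (\<Sum>i<n. us ! l $ i * us ! k $ i) = ?c l * (if l = k then 1 else 0)"
      using orthonormal_vecs_nth[OF us _ k, of l] dim[OF k] by (simp add: scalar_prod_def lessThan_atLeast0)
  qed
  also have "(\<Sum>l<length us. ?c l * (if l = k then 1 else 0)) = ?c k"
    using k by (simp add: of_bool_def[symmetric] sum.delta)
  finally show ?thesis
    using comm_scalar_prod[OF orthonormal_vecs_carrier[OF us k] mult_mat_vec_carrier[OF _ x]] u_k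
    by simp
qed

lemma orth_compl_proj_id:
  assumes us: "set us \<subseteq> carrier_vec n" and x: "x \<in> carrier_vec n"
    and orth: "\<forall>u\<in>set us. u \<bullet> x = 0"
  shows "orth_compl_proj n us *\<^sub>v x = x"
  unfolding orth_compl_proj_mult_vec[OF x us] using x orth by (intro eq_vecI) auto

lemma mat_trace_orth_compl_proj:
  assumes us: "orthonormal_vecs n us"
  shows "mat_trace (orth_compl_proj n us) = real n - real (length us)"
proof -
  have "mat_trace (orth_compl_proj n us) = real n - (\<Sum>l<length us. \<Sum>i<n. us ! l $ i * us ! l $ i)"
    unfolding mat_trace_def orth_compl_proj_def by (simp add: sum_subtractf sum.swap[of _ "{..<n}"])
  also have "(\<Sum>l<length us. \<Sum>i<n. us ! l $ i * us ! l $ i) = (\<Sum>l<length us. 1)"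
  proof (intro sum.cong refl)
    fix l assume "l \<in> {..<length us}"
    hence "us ! l \<bullet> us ! l = 1" "us ! l \<in> carrier_vec n"
      using orthonormal_vecs_nth[OF us] orthonormal_vecs_carrier[OF us] by auto
    thus "(\<Sum>i<n. us ! l $ i * us ! l $ i) = 1" by (simp add: scalar_prod_def lessThan_atLeast0)
  qed
  finally show ?thesis by simp
qed

lemma orthogonal_complement_nonzero:
  assumes us: "orthonormal_vecs n us" and len: "length us < n"
  obtains x where "x \<in> carrier_vec n" "x \<noteq> 0\<^sub>v n" "\<forall>u\<in>set us. u \<bullet> x = 0"
proof -
  let ?P = "orth_compl_proj n us"
  have "mat_trace ?P \<noteq> 0" using mat_trace_orth_compl_proj[OF us] len by simp
  then obtain j where j: "j < n" "?P $$ (j, j) \<noteq> 0"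
    unfolding mat_trace_def by (metis (no_types, lifting) orth_compl_proj_carrier(2) lessThan_iff sum.neutral)
  define x where "x = ?P *\<^sub>v unit_vec n j"
  have "x \<in> carrier_vec n" unfolding x_def by (simp add: carrier_vecI)
  moreover have "x $ j \<noteq> 0" unfolding x_def using j by simp
  hence "x \<noteq> 0\<^sub>v n" using j by auto
  moreover have "\<forall>u\<in>set us. u \<bullet> x = 0" unfolding x_def using orth_compl_proj_orthogonal[OF us] by simp
  ultimately show ?thesis using that by blast
qed

lemma transpose_sandwich:
  fixes A P :: "'a::comm_semiring_0 mat"
  assumes A: "A \<in> carrier_mat n n" and P: "P \<in> carrier_mat n n"
    and "transpose_mat A = A" "transpose_mat P = P"
  shows "transpose_mat (P * A * P) = P * A * P"
proof -
  have PA: "P * A \<in> carrier_mat n n" using P A by simp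
  have "transpose_mat (P * A * P) = transpose_mat P * (transpose_mat A * transpose_mat P)"
    by (simp only: transpose_mult[OF PA P] transpose_mult[OF P A])
  also have "\<dots> = P * A * P" using assms by (simp add: assoc_mult_mat[of _ n n _ n _ n])
  finally show ?thesis .
qed

context
  fixes A :: "real mat" and n :: nat
  assumes A: "A \<in> carrier_mat n n" and sym: "transpose_mat A = A"
begin

lemma symmetric_scalar_prod_mult_vec:
  "x \<in> carrier_vec n \<Longrightarrow> y \<in> carrier_vec n \<Longrightarrow> (A *\<^sub>v x) \<bullet> y = x \<bullet> (A *\<^sub>v y)"
  using transpose_vec_mult_scalar[OF A, of y x] sym by simp

lemma orthogonal_eigenvector_mult_vec:
  assumes u: "u \<in> carrier_vec n" "A *\<^sub>v u = \<mu> \<cdot>\<^sub>v u" and x: "x \<in> carrier_vec n" "u \<bullet> x = 0"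
  shows "u \<bullet> (A *\<^sub>v x) = 0"
  using symmetric_scalar_prod_mult_vec[OF u(1) x(1)] u x by simp

text \<open>The projected matrix \<open>B = P A P\<close> is symmetric and agrees with \<open>A\<close> on the orthogonal
  complement of \<open>us\<close>. An eigenvector of \<open>B\<close> for a nonzero eigenvalue lies in the range of \<open>P\<close>;
  if there is none, then \<open>B = 0\<close> and every vector of that complement is an eigenvector of \<open>A\<close>.\<close>
lemma eigenvector_orthogonal_to_eigenvectors:
  assumes us: "orthonormal_vecs n us" and len: "length us < n"
    and eig: "\<forall>u\<in>set us. \<exists>\<mu>. A *\<^sub>v u = \<mu> \<cdot>\<^sub>v u"
  obtains x \<mu> where "x \<in> carrier_vec n" "x \<noteq> 0\<^sub>v n" "\<forall>u\<in>set us. u \<bullet> x = 0" "A *\<^sub>v x = \<mu> \<cdot>\<^sub>v x"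
proof -
  define P where "P = orth_compl_proj n us"
  define B where "B = P * A * P"
  have P: "P \<in> carrier_mat n n" unfolding P_def by simp
  have B: "B \<in> carrier_mat n n" unfolding B_def using A P by simp
  have carr: "set us \<subseteq> carrier_vec n" using us unfolding orthonormal_vecs_def by simp
  have symB: "transpose_mat B = B"
    unfolding B_def P_def by (rule transpose_sandwich[OF A _ sym transpose_orth_compl_proj]) simp
  have B_mult_vec: "B *\<^sub>v x = P *\<^sub>v (A *\<^sub>v (P *\<^sub>v x))" if "x \<in> carrier_vec n" for x
    unfolding B_def using A P that by (simp add: assoc_mult_mat_vec[of _ n n _ n])
  have B_eq_A: "B *\<^sub>v x = A *\<^sub>v x" if x: "x \<in> carrier_vec n" "\<forall>u\<in>set us. u \<bullet> x = 0" for x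
  proof -
    have "\<forall>u\<in>set us. u \<bullet> (A *\<^sub>v x) = 0"
      using eig x carr orthogonal_eigenvector_mult_vec by blast
    thus ?thesis
      unfolding B_mult_vec[OF x(1)] P_def using orth_compl_proj_id[OF carr] A x by simp
  qed
  show ?thesis
  proof (cases "\<exists>e. e \<noteq> 0 \<and> eigenvalue B e")
    case True
    then obtain e x where e: "e \<noteq> 0" and x: "x \<in> carrier_vec n" "x \<noteq> 0\<^sub>v n" "B *\<^sub>v x = e \<cdot>\<^sub>v x"
      using B unfolding eigenvalue_def eigenvector_def by auto
    have "x = P *\<^sub>v ((1 / e) \<cdot>\<^sub>v (A *\<^sub>v (P *\<^sub>v x)))"
      using x e B_mult_vec[OF x(1)] A P by (simp add: mult_mat_vec[of P n n] smult_smult_assoc)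
    hence orth: "\<forall>u\<in>set us. u \<bullet> x = 0"
      using orth_compl_proj_orthogonal[OF us, folded P_def] A P x(1)
      by (metis mult_mat_vec_carrier smult_carrier_vec)
    show ?thesis using that[OF x(1,2) orth] B_eq_A[OF x(1) orth] x(3) by metis
  next
    case False
    hence "B = 0\<^sub>m n n" using symmetric_zero_spectrum_imp_zero[OF B symB] by blast
    obtain x where x: "x \<in> carrier_vec n" "x \<noteq> 0\<^sub>v n" "\<forall>u\<in>set us. u \<bullet> x = 0"
      using orthogonal_complement_nonzero[OF us len] by blast
    have "A *\<^sub>v x = 0\<^sub>m n n *\<^sub>v x" using B_eq_A[OF x(1,3)] \<open>B = 0\<^sub>m n n\<close> by simp
    hence "A *\<^sub>v x = 0 \<cdot>\<^sub>v x" using x(1) by (auto intro!: eq_vecI)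
    thus ?thesis using that x by blast
  qed
qed

lemma orthonormal_eigenbasis:
  obtains us ms where "length us = n" "length ms = n" "orthonormal_vecs n us"
    "\<forall>k<n. A *\<^sub>v us ! k = ms ! k \<cdot>\<^sub>v us ! k"
proof -
  have "\<exists>us ms. length us = m \<and> length ms = m \<and> orthonormal_vecs n us
      \<and> (\<forall>k<m. A *\<^sub>v us ! k = ms ! k \<cdot>\<^sub>v us ! k)" if "m \<le> n" for m
    using that
  proof (induction m)
    case 0
    show ?case by (simp add: orthonormal_vecs_def)
  next
    case (Suc m)
    then obtain us ms where IH: "length us = m" "length ms = m" "orthonormal_vecs n us"
        "\<forall>k<m. A *\<^sub>v us ! k = ms ! k \<cdot>\<^sub>v us ! k"
      by auto
    have "\<forall>u\<in>set us. \<exists>\<mu>. A *\<^sub>v u = \<mu> \<cdot>\<^sub>v u" using IH by (metis in_set_conv_nth)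
    then obtain x \<mu> where x: "x \<in> carrier_vec n" "x \<noteq> 0\<^sub>v n" "\<forall>u\<in>set us. u \<bullet> x = 0"
        "A *\<^sub>v x = \<mu> \<cdot>\<^sub>v x"
      using eigenvector_orthogonal_to_eigenvectors[OF IH(3)] IH(1) Suc(2) by auto
    define y where "y = (1 / sqrt (x \<bullet> x)) \<cdot>\<^sub>v x"
    have "0 < x \<bullet> x" by (rule scalar_prod_self_pos[OF x(1,2)])
    hence "y \<bullet> y = 1" unfolding y_def using x(1) by simp
    moreover have "\<forall>u\<in>set us. u \<bullet> y = 0" "A *\<^sub>v y = \<mu> \<cdot>\<^sub>v y"
      unfolding y_def using x A IH(3) by (auto simp: mult_mat_vec[of A n n] smult_smult_assoc
          orthonormal_vecs_def subset_iff)
    ultimately show ?case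
      using orthonormal_vecs_snoc[OF IH(3)] x(1) IH(1,2,4) unfolding y_def
      by (intro exI[of _ "us @ [y]"] exI[of _ "ms @ [\<mu>]"])
        (auto simp: nth_append less_Suc_eq y_def)
  qed
  thus ?thesis using that by blast
qed

end

lemma orthonormal_basis_mat:
  assumes us: "orthonormal_vecs n us" "length us = n"
  shows "transpose_mat (mat_of_cols n us) * mat_of_cols n us = 1\<^sub>m n"
    and "mat_of_cols n us * transpose_mat (mat_of_cols n us) = 1\<^sub>m n"
proof -
  let ?U = "mat_of_cols n us"
  have U: "?U \<in> carrier_mat n n" using mat_of_cols_carrier(1)[of n us] us(2) by simp
  have "col ?U j = us ! j" if "j < n" for j
    using orthonormal_vecs_carrier[OF us(1)] us(2) that by simp
  thus UTU: "transpose_mat ?U * ?U = 1\<^sub>m n"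
    using U orthonormal_vecs_nth[OF us(1)] us(2) by (intro eq_matI) auto
  show "?U * transpose_mat ?U = 1\<^sub>m n"
    by (rule mat_mult_left_right_inverse[OF _ U UTU]) (use U in simp)
qed

lemma orthonormal_basis_coords:
  assumes us: "orthonormal_vecs n us" "length us = n" and y: "y \<in> carrier_vec n"
  defines "z \<equiv> transpose_mat (mat_of_cols n us) *\<^sub>v y"
  shows "y = mat_of_cols n us *\<^sub>v z" and "\<And>k. k < n \<Longrightarrow> z $ k = us ! k \<bullet> y"
proof -
  have "mat_of_cols n us *\<^sub>v z = (mat_of_cols n us * transpose_mat (mat_of_cols n us)) *\<^sub>v y"
    unfolding z_def using mat_of_cols_carrier(1)[of n us] us(2) y
    by (simp add: assoc_mult_mat_vec[of _ n n _ n])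
  thus "y = mat_of_cols n us *\<^sub>v z" using orthonormal_basis_mat(2)[OF us] y by simp
  show "z $ k = us ! k \<bullet> y" if "k < n" for k
    unfolding z_def using that us(2) y orthonormal_vecs_carrier[OF us(1)] by simp
qed

lemma orthonormal_basis_norm:
  assumes us: "orthonormal_vecs n us" "length us = n" and y: "y \<in> carrier_vec n"
  shows "y \<bullet> y = (\<Sum>k<n. (us ! k \<bullet> y)\<^sup>2)"
proof -
  define z where "z = transpose_mat (mat_of_cols n us) *\<^sub>v y"
  have U: "mat_of_cols n us \<in> carrier_mat n n" using mat_of_cols_carrier(1)[of n us] us(2) by simp
  hence z: "z \<in> carrier_vec n" unfolding z_def using y by simp
  have "y \<bullet> y = y \<bullet> (mat_of_cols n us *\<^sub>v z)"
    unfolding z_def by (rule arg_cong[OF orthonormal_basis_coords(1)[OF us y]])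
  also have "\<dots> = z \<bullet> z" using transpose_vec_mult_scalar[OF U z y, folded z_def] by simp
  also have "\<dots> = (\<Sum>k<n. (us ! k \<bullet> y)\<^sup>2)"
    using z orthonormal_basis_coords(2)[OF us y, folded z_def]
    by (simp add: scalar_prod_def lessThan_atLeast0 power2_eq_square)
  finally show ?thesis .
qed

context
  fixes A :: "real mat" and n :: nat and us :: "real vec list" and ms :: "real list"
  assumes A: "A \<in> carrier_mat n n" and us: "orthonormal_vecs n us" "length us = n"
    and ms: "length ms = n" and eig: "\<forall>k<n. A *\<^sub>v us ! k = ms ! k \<cdot>\<^sub>v us ! k"
begin

lemma eigenbasis_diagonalizes:
  "A = mat_of_cols n us * mat_diag n (\<lambda>k. ms ! k) * transpose_mat (mat_of_cols n us)"
proof -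
  let ?U = "mat_of_cols n us" and ?D = "mat_diag n (\<lambda>k. ms ! k)"
  have U: "?U \<in> carrier_mat n n" using mat_of_cols_carrier(1)[of n us] us(2) by simp
  have "A * ?U = ?U * ?D"
  proof (rule eq_matI)
    fix i j assume "i < dim_row (?U * ?D)" "j < dim_col (?U * ?D)"
    hence ij: "i < n" "j < n" using U by (auto simp: mat_diag_def)
    have "col ?U j = us ! j" using orthonormal_vecs_carrier[OF us(1)] us(2) ij by simp
    hence "(A * ?U) $$ (i, j) = (A *\<^sub>v us ! j) $ i" using A U ij us(2) by simp
    also have "\<dots> = (?U * ?D) $$ (i, j)"
      using eig ij U orthonormal_vecs_carrier[OF us(1), of j] us(2)
      by (simp add: mat_diag_mult_right mat_of_cols_index mult.commute)
    finally show "(A * ?U) $$ (i, j) = (?U * ?D) $$ (i, j)" .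
  qed (use A U us(2) in \<open>auto simp: mat_diag_def\<close>)
  have "A = A * (?U * transpose_mat ?U)" using orthonormal_basis_mat(2)[OF us] A by simp
  also have "\<dots> = A * ?U * transpose_mat ?U"
    using A U by (simp add: assoc_mult_mat[of A n n ?U n "transpose_mat ?U" n])
  finally show ?thesis using \<open>A * ?U = ?U * ?D\<close> by simp
qed

lemma char_poly_eigenbasis: "char_poly A = (\<Prod>a\<leftarrow>ms. [:-a, 1:])"
proof -
  let ?U = "mat_of_cols n us" and ?D = "mat_diag n (\<lambda>k. ms ! k)"
  have "similar_mat A ?D"
    using eigenbasis_diagonalizes orthonormal_basis_mat[OF us] us(2)
    by (intro similar_matI[of _ _ ?U "transpose_mat ?U" n]) (auto simp: A)
  moreover have "upper_triangular ?D" by (simp add: upper_triangular_def mat_diag_def)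
  moreover have "diag_mat ?D = ms"
    using ms by (intro nth_equalityI) (auto simp: diag_mat_def mat_diag_def)
  ultimately show ?thesis
    using char_poly_similar char_poly_upper_triangular[OF mat_diag_dim] by metis
qed

lemma quadratic_form_eigenbasis:
  assumes y: "y \<in> carrier_vec n"
  shows "y \<bullet> (A *\<^sub>v y) = (\<Sum>k<n. ms ! k * (us ! k \<bullet> y)\<^sup>2)"
proof -
  define z where "z = transpose_mat (mat_of_cols n us) *\<^sub>v y"
  let ?U = "mat_of_cols n us" and ?D = "mat_diag n (\<lambda>k. ms ! k)"
  have U: "?U \<in> carrier_mat n n" using mat_of_cols_carrier(1)[of n us] us(2) by simp
  hence z: "z \<in> carrier_vec n" unfolding z_def using y by simp
  have Dz: "?D *\<^sub>v z \<in> carrier_vec n" using mult_mat_vec_carrier[OF mat_diag_dim z] .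
  have "A *\<^sub>v y = ?U *\<^sub>v (?D *\<^sub>v z)"
    unfolding z_def using y U by (subst eigenbasis_diagonalizes) (simp add: assoc_mult_mat_vec[of _ n n _ n])
  hence "y \<bullet> (A *\<^sub>v y) = z \<bullet> (?D *\<^sub>v z)"
    using transpose_vec_mult_scalar[OF U Dz y, folded z_def] by simp
  also have "?D *\<^sub>v z = vec n (\<lambda>k. ms ! k * z $ k)"
  proof (rule eq_vecI)
    fix k assume "k < dim_vec (vec n (\<lambda>k. ms ! k * z $ k))"
    hence k: "k < n" by simp
    have "(?D *\<^sub>v z) $ k = (\<Sum>i\<in>{0..<n}. (if k = i then ms ! i else 0) * z $ i)"
      using k z by (simp add: mat_diag_def scalar_prod_def)
    also have "\<dots> = (\<Sum>i\<in>{0..<n}. if k = i then ms ! k * z $ k else 0)"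
      by (rule sum.cong) auto
    finally show "(?D *\<^sub>v z) $ k = vec n (\<lambda>k. ms ! k * z $ k) $ k" using k by simp
  qed (simp add: mat_diag_def)
  also have "z \<bullet> vec n (\<lambda>k. ms ! k * z $ k) = (\<Sum>k<n. ms ! k * (z $ k)\<^sup>2)"
    using z by (simp add: scalar_prod_def lessThan_atLeast0 power2_eq_square mult_ac)
  finally show ?thesis using orthonormal_basis_coords(2)[OF us y, folded z_def] by simp
qed

lemma eigenbasis_pair_forms:
  fixes a b :: real
  assumes ij: "i < n" "j < n" "i \<noteq> j"
  defines "y \<equiv> a \<cdot>\<^sub>v us ! i + b \<cdot>\<^sub>v us ! j"
  shows "y \<bullet> y = a\<^sup>2 + b\<^sup>2" and "y \<bullet> (A *\<^sub>v y) = a\<^sup>2 * ms ! i + b\<^sup>2 * ms ! j"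
proof -
  have ui: "us ! i \<in> carrier_vec n" and uj: "us ! j \<in> carrier_vec n"
    using orthonormal_vecs_carrier[OF us(1)] ij us(2) by auto
  have o: "us ! i \<bullet> us ! i = 1" "us ! j \<bullet> us ! j = 1" "us ! i \<bullet> us ! j = 0" "us ! j \<bullet> us ! i = 0"
    using orthonormal_vecs_nth[OF us(1)] ij us(2) by auto
  show "y \<bullet> y = a\<^sup>2 + b\<^sup>2"
    unfolding y_def using ui uj o
    by (simp add: add_scalar_prod_distrib[of _ n] scalar_prod_add_distrib[of _ n] power2_eq_square)
  have "A *\<^sub>v y = (a * ms ! i) \<cdot>\<^sub>v us ! i + (b * ms ! j) \<cdot>\<^sub>v us ! j"
    unfolding y_def using ui uj eig ij
    by (simp add: mult_add_distrib_mat_vec[OF A] mult_mat_vec[OF A] smult_smult_assoc)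
  thus "y \<bullet> (A *\<^sub>v y) = a\<^sup>2 * ms ! i + b\<^sup>2 * ms ! j" unfolding y_def using ui uj o
    by (simp add: add_scalar_prod_distrib[of _ n] scalar_prod_add_distrib[of _ n] power2_eq_square)
qed

end

section \<open>Courant--Fischer bounds on the second smallest eigenvalue\<close>

lemma proots_prod_linear: "proots (\<Prod>a\<leftarrow>ms. [:-a, 1:]) = mset (ms :: 'a::idom list)"
proof (induction ms)
  case (Cons a ms)
  have "(\<Prod>a\<leftarrow>ms. [:-a, 1:]) \<noteq> 0" by (auto simp: prod_list_zero_iff)
  hence "proots ([:-a, 1:] * (\<Prod>a\<leftarrow>ms. [:-a, 1:])) = proots [:-a, 1:] + proots (\<Prod>a\<leftarrow>ms. [:-a, 1:])"
    by (intro proots_mult) auto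
  thus ?case using Cons by simp
qed simp

lemma sorted_eigenvalues_eigenbasis:
  assumes "A \<in> carrier_mat n n" "orthonormal_vecs n us" "length us = n" "length ms = n"
    "\<forall>k<n. A *\<^sub>v us ! k = ms ! k \<cdot>\<^sub>v us ! k"
  shows "sorted_eigenvalues A = sort ms"
  unfolding sorted_eigenvalues_def char_poly_eigenbasis[OF assms] proots_prod_linear
  by (simp add: sorted_list_of_multiset_mset)

lemma length_filter_sort: "length (filter P (sort xs)) = length (filter P xs)"
  by (metis mset_filter mset_sort size_mset)

lemma sort_nth_1_less:
  fixes xs :: "'a::linorder list"
  assumes "2 \<le> length xs" "sort xs ! 1 < c"
  obtains i j where "i < length xs" "j < length xs" "i \<noteq> j" "xs ! i < c" "xs ! j < c"
proof -
  obtain a b rest where ys: "sort xs = a # b # rest"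
    using assms(1) by (metis length_sort One_nat_def Suc_1 Suc_le_length_iff)
  have "a \<le> b" using sorted_sort[of xs] unfolding ys by simp
  hence "a < c" "b < c" using assms(2) unfolding ys by (auto intro: le_less_trans)
  hence "2 \<le> length (filter (\<lambda>x. x < c) (sort xs))" using assms(2) unfolding ys by simp
  hence "2 \<le> length (filter (\<lambda>x. x < c) xs)" by (simp only: length_filter_sort)
  hence "\<not> card {i. i < length xs \<and> xs ! i < c} \<le> Suc 0" by (simp add: length_filter_conv_card)
  hence "\<not> (\<forall>i\<in>{i. i < length xs \<and> xs ! i < c}. \<forall>j\<in>{i. i < length xs \<and> xs ! i < c}. i = j)"
    using card_le_Suc0_iff_eq[of "{i. i < length xs \<and> xs ! i < c}"] by simp
  thus ?thesis using that by blast
qed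

lemma sort_nth_1_greater:
  fixes xs :: "'a::linorder list"
  assumes "t < sort xs ! 1"
  obtains k0 where "\<And>k. k < length xs \<Longrightarrow> k \<noteq> k0 \<Longrightarrow> t < xs ! k"
proof -
  have "length (filter (\<lambda>x. x \<le> t) (sort xs)) \<le> 1"
  proof (cases "sort xs" rule: remdups_adj.cases)
    case (3 a b rest)
    have "\<forall>x\<in>set rest. b \<le> x" using sorted_sort[of xs] unfolding 3 by simp
    moreover have "t < b" using assms unfolding 3 by simp
    ultimately have "filter (\<lambda>x. x \<le> t) (b # rest) = []"
      by (auto simp: filter_empty_conv intro: less_le_trans)
    thus ?thesis unfolding 3 by simp
  qed auto
  hence "length (filter (\<lambda>x. x \<le> t) xs) \<le> 1" by (simp only: length_filter_sort)
  hence "card {i. i < length xs \<and> xs ! i \<le> t} \<le> Suc 0" by (simp add: length_filter_conv_card)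
  hence "\<forall>i\<in>{i. i < length xs \<and> xs ! i \<le> t}. \<forall>j\<in>{i. i < length xs \<and> xs ! i \<le> t}. i = j"
    by (simp add: card_le_Suc0_iff_eq)
  thus ?thesis using that by (metis (mono_tags, lifting) mem_Collect_eq not_le)
qed

lemma nontrivial_zero_combination:
  fixes \<alpha> \<beta> :: real
  obtains a b where "a \<noteq> 0 \<or> b \<noteq> 0" "a * \<alpha> + b * \<beta> = 0"
proof (cases "\<alpha> = 0 \<and> \<beta> = 0")
  case True thus ?thesis using that[of 1 0] by simp
next
  case False thus ?thesis using that[of \<beta> "- \<alpha>"] by (auto simp: mult.commute)
qed

context
  fixes A :: "real mat" and n :: nat
  assumes A: "A \<in> carrier_mat n n" and sym: "transpose_mat A = A"
begin

lemma second_eigenvalue_ge: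
  assumes n: "2 \<le> n" and w: "w \<in> carrier_vec n"
    and form: "\<And>y. y \<in> carrier_vec n \<Longrightarrow> y \<bullet> w = 0 \<Longrightarrow> c * (y \<bullet> y) \<le> y \<bullet> (A *\<^sub>v y)"
  shows "c \<le> sorted_eigenvalues A ! 1"
proof (rule ccontr)
  obtain us ms where us: "length us = n" "length ms = n" "orthonormal_vecs n us"
    and eig: "\<forall>k<n. A *\<^sub>v us ! k = ms ! k \<cdot>\<^sub>v us ! k"
    using orthonormal_eigenbasis[OF A sym] by blast
  assume "\<not> c \<le> sorted_eigenvalues A ! 1"
  hence "sort ms ! 1 < c"
    using sorted_eigenvalues_eigenbasis[OF A us(3,1,2) eig] by simp
  then obtain i j where ij: "i < n" "j < n" "i \<noteq> j" "ms ! i < c" "ms ! j < c"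
    using sort_nth_1_less[of ms] n us(2) by metis
  obtain a b where ab: "a \<noteq> 0 \<or> b \<noteq> 0" "a * (us ! i \<bullet> w) + b * (us ! j \<bullet> w) = 0"
    by (rule nontrivial_zero_combination)
  define y where "y = a \<cdot>\<^sub>v us ! i + b \<cdot>\<^sub>v us ! j"
  have y: "y \<in> carrier_vec n"
    unfolding y_def using orthonormal_vecs_carrier[OF us(3)] ij us(1) by simp
  have "y \<bullet> w = 0"
    unfolding y_def using orthonormal_vecs_carrier[OF us(3)] ij us(1) w ab(2)
    by (simp add: add_scalar_prod_distrib[of _ n])
  hence "c * (y \<bullet> y) \<le> y \<bullet> (A *\<^sub>v y)" by (rule form[OF y])
  moreover note eigenbasis_pair_forms[OF A us(3,1,2) eig ij(1-3), of a b, folded y_def]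
  moreover have "a\<^sup>2 * ms ! i + b\<^sup>2 * ms ! j < c * (a\<^sup>2 + b\<^sup>2)"
  proof -
    have "a\<^sup>2 * ms ! i \<le> a\<^sup>2 * c" "b\<^sup>2 * ms ! j \<le> b\<^sup>2 * c"
      using ij by (auto intro: mult_left_mono)
    moreover have "a\<^sup>2 * ms ! i < a\<^sup>2 * c \<or> b\<^sup>2 * ms ! j < b\<^sup>2 * c"
      using ab(1) ij by auto
    ultimately show ?thesis by (simp add: algebra_simps) linarith
  qed
  ultimately show False by simp
qed

lemma second_eigenvalue_le:
  assumes v: "v \<in> carrier_vec n" and w: "w \<in> carrier_vec n"
    and indep: "\<And>a b. a \<cdot>\<^sub>v v + b \<cdot>\<^sub>v w = 0\<^sub>v n \<Longrightarrow> a = 0 \<and> b = 0"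
    and form: "\<And>a b. (a \<cdot>\<^sub>v v + b \<cdot>\<^sub>v w) \<bullet> (A *\<^sub>v (a \<cdot>\<^sub>v v + b \<cdot>\<^sub>v w))
        \<le> t * ((a \<cdot>\<^sub>v v + b \<cdot>\<^sub>v w) \<bullet> (a \<cdot>\<^sub>v v + b \<cdot>\<^sub>v w))"
  shows "sorted_eigenvalues A ! 1 \<le> t"
proof (rule ccontr)
  obtain us ms where us: "length us = n" "length ms = n" "orthonormal_vecs n us"
    and eig: "\<forall>k<n. A *\<^sub>v us ! k = ms ! k \<cdot>\<^sub>v us ! k"
    using orthonormal_eigenbasis[OF A sym] by blast
  assume "\<not> sorted_eigenvalues A ! 1 \<le> t"
  hence "t < sort ms ! 1"
    using sorted_eigenvalues_eigenbasis[OF A us(3,1,2) eig] by simp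
  then obtain k0 where k0: "\<And>k. k < n \<Longrightarrow> k \<noteq> k0 \<Longrightarrow> t < ms ! k"
    using sort_nth_1_greater[of t ms] us(2) by metis
  obtain a b where ab: "a \<noteq> 0 \<or> b \<noteq> 0" "a * (us ! k0 \<bullet> v) + b * (us ! k0 \<bullet> w) = 0"
    by (rule nontrivial_zero_combination)
  define y where "y = a \<cdot>\<^sub>v v + b \<cdot>\<^sub>v w"
  have y: "y \<in> carrier_vec n" unfolding y_def using v w by simp
  have "y \<noteq> 0\<^sub>v n" using indep ab(1) unfolding y_def by blast
  hence "0 < (\<Sum>k<n. (us ! k \<bullet> y)\<^sup>2)"
    using scalar_prod_self_pos[OF y] orthonormal_basis_norm[OF us(3,1) y] by simp
  then obtain k1 where k1: "k1 < n" "us ! k1 \<bullet> y \<noteq> 0"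
    by (metis (no_types, lifting) lessThan_iff power_zero_numeral sum.neutral less_irrefl)
  have yk0: "us ! k0 \<bullet> y = 0" if "k0 < n"
    unfolding y_def using ab(2) v w orthonormal_vecs_carrier[OF us(3)] that us(1)
    by (simp add: scalar_prod_add_distrib[of _ n])
  have "k1 \<noteq> k0" using k1 yk0 by auto
  have "0 < (\<Sum>k<n. (ms ! k - t) * (us ! k \<bullet> y)\<^sup>2)"
  proof (rule sum_pos2[of _ k1])
    show "0 < (ms ! k1 - t) * (us ! k1 \<bullet> y)\<^sup>2" using k0[OF k1(1) \<open>k1 \<noteq> k0\<close>] k1(2) by simp
  next
    fix k assume "k \<in> {..<n}"
    thus "0 \<le> (ms ! k - t) * (us ! k \<bullet> y)\<^sup>2"
      using k0[of k] yk0 by (cases "k = k0") (auto intro: less_imp_le)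
  qed (use k1 in auto)
  also have "(\<Sum>k<n. (ms ! k - t) * (us ! k \<bullet> y)\<^sup>2) = y \<bullet> (A *\<^sub>v y) - t * (y \<bullet> y)"
    unfolding orthonormal_basis_norm[OF us(3,1) y] quadratic_form_eigenbasis[OF A us(3,1,2) eig y]
    by (simp add: left_diff_distrib sum_subtractf sum_distrib_left)
  finally show False using form[of a b, folded y_def] by linarith
qed

end

section \<open>Graph Laplacians\<close>

lemma laplacian_carrier [simp]:
  "laplacian N E \<in> carrier_mat N N" "dim_row (laplacian N E) = N" "dim_col (laplacian N E) = N"
  unfolding laplacian_def by simp_all

lemma transpose_laplacian:
  assumes "\<And>i j. E i j = E j i"
  shows "transpose_mat (laplacian N E) = laplacian N E"
  by (rule eq_matI) (auto simp: laplacian_def assms)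

lemma laplacian_mult_vec:
  assumes irrefl: "\<And>i. \<not> E i i" and y: "y \<in> carrier_vec N" and i: "i < N"
  shows "(laplacian N E *\<^sub>v y) $ i = (\<Sum>j<N. if E i j then y $ i - y $ j else 0)"
proof -
  have "(laplacian N E *\<^sub>v y) $ i = (\<Sum>j<N. laplacian N E $$ (i, j) * y $ j)"
    using i y by (simp add: scalar_prod_def lessThan_atLeast0)
  also have "\<dots> = (\<Sum>j<N. (if j = i then real (card {v \<in> {0..<N}. E i v}) * y $ i else 0)
      + (if E i j then - y $ j else 0))"
    using i irrefl by (intro sum.cong) (auto simp: laplacian_def)
  also have "\<dots> = real (card {v \<in> {0..<N}. E i v}) * y $ i + (\<Sum>j<N. if E i j then - y $ j else 0)"
    using i by (simp add: sum.distrib)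
  also have "real (card {v \<in> {0..<N}. E i v}) = (\<Sum>j<N. if E i j then 1 else 0)"
  proof -
    have "{v \<in> {0..<N}. E i v} = {..<N} \<inter> Collect (E i)" by auto
    thus ?thesis by (simp add: sum.If_cases)
  qed
  also have "(\<Sum>j<N. if E i j then 1 else 0) * y $ i + (\<Sum>j<N. if E i j then - y $ j else 0)
      = (\<Sum>j<N. if E i j then y $ i - y $ j else 0)"
    by (simp add: sum_distrib_right sum.distrib[symmetric] if_distrib cong: if_cong)
  finally show ?thesis .
qed

lemma laplacian_quadratic_form:
  assumes irrefl: "\<And>i. \<not> E i i" and sym: "\<And>i j. E i j = E j i" and y: "y \<in> carrier_vec N"
  shows "2 * (y \<bullet> (laplacian N E *\<^sub>v y)) = (\<Sum>i<N. \<Sum>j<N. if E i j then (y $ i - y $ j)\<^sup>2 else 0)"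
proof -
  define S where "S = (\<Sum>i<N. \<Sum>j<N. if E i j then y $ i * (y $ i - y $ j) else 0)"
  have form: "y \<bullet> (laplacian N E *\<^sub>v y) = S"
    unfolding S_def using y laplacian_mult_vec[of E, OF irrefl y]
    by (simp add: scalar_prod_def lessThan_atLeast0 sum_distrib_left if_distrib cong: if_cong)
  define S' where "S' = (\<Sum>i<N. \<Sum>j<N. if E i j then y $ j * (y $ j - y $ i) else 0)"
  have "S = (\<Sum>j<N. \<Sum>i<N. if E i j then y $ i * (y $ i - y $ j) else 0)"
    unfolding S_def by (rule sum.swap)
  also have "\<dots> = S'" unfolding S'_def by (intro sum.cong refl) (simp add: sym)
  finally have "S + S = S + S'" by simp
  also have "\<dots> = (\<Sum>i<N. \<Sum>j<N. if E i j then (y $ i - y $ j)\<^sup>2 else 0)"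
    unfolding S_def S'_def sum.distrib[symmetric]
    by (intro sum.cong refl) (simp add: power2_eq_square algebra_simps)
  finally show ?thesis using form by simp
qed

section \<open>Two cliques joined by bridge edges\<close>

lemma sum_sum_diff_squared:
  "(\<Sum>i<N. \<Sum>j<N. ((y i :: real) - y j)\<^sup>2) = 2 * real N * (\<Sum>i<N. (y i)\<^sup>2) - 2 * (\<Sum>i<N. y i)\<^sup>2"
proof -
  have "(\<Sum>i<N. \<Sum>j<N. (y i - y j)\<^sup>2) = (\<Sum>i<N. \<Sum>j<N. (y i)\<^sup>2 + (y j)\<^sup>2 - 2 * (y i * y j))"
    by (simp add: power2_eq_square algebra_simps)
  also have "\<dots> = (\<Sum>i<N. real N * (y i)\<^sup>2 + (\<Sum>j<N. (y j)\<^sup>2) - 2 * (y i * (\<Sum>j<N. y j)))"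
    by (simp add: sum.distrib sum_subtractf sum_distrib_left)
  also have "\<dots> = 2 * real N * (\<Sum>i<N. (y i)\<^sup>2) - 2 * (\<Sum>i<N. y i)\<^sup>2"
    by (simp add: sum.distrib sum_subtractf sum_distrib_left sum_distrib_right power2_eq_square
        algebra_simps)
  finally show ?thesis .
qed

lemma square_sum3_le: "((p::real) + q + r)\<^sup>2 \<le> 3 * (p\<^sup>2 + q\<^sup>2 + r\<^sup>2)"
proof -
  have "3 * (p\<^sup>2 + q\<^sup>2 + r\<^sup>2) - (p + q + r)\<^sup>2 = (p - q)\<^sup>2 + (q - r)\<^sup>2 + (p - r)\<^sup>2"
    by (simp add: power2_eq_square algebra_simps)
  moreover have "0 \<le> (p - q)\<^sup>2 + (q - r)\<^sup>2 + (p - r)\<^sup>2" by simp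
  ultimately show ?thesis by linarith
qed

lemma cross_sum_diff_squared_le:
  fixes y :: "'a \<Rightarrow> real"
  shows "(\<Sum>i\<in>I. \<Sum>j\<in>J. (y i - y j)\<^sup>2)
    \<le> 3 * real (card J) * (\<Sum>i\<in>I. (y i - y a)\<^sup>2) + 3 * real (card I * card J) * (y a - y b)\<^sup>2
      + 3 * real (card I) * (\<Sum>j\<in>J. (y b - y j)\<^sup>2)"
proof -
  have "(\<Sum>i\<in>I. \<Sum>j\<in>J. (y i - y j)\<^sup>2)
      \<le> (\<Sum>i\<in>I. \<Sum>j\<in>J. 3 * ((y i - y a)\<^sup>2 + (y a - y b)\<^sup>2 + (y b - y j)\<^sup>2))"
    using square_sum3_le[of "y i - y a" "y a - y b" "y b - y j" for i j]
    by (intro sum_mono) simp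
  also have "\<dots> = 3 * real (card J) * (\<Sum>i\<in>I. (y i - y a)\<^sup>2) + 3 * real (card I * card J) * (y a - y b)\<^sup>2
      + 3 * real (card I) * (\<Sum>j\<in>J. (y b - y j)\<^sup>2)"
    by (simp add: sum.distrib sum_distrib_left sum_distrib_right algebra_simps)
  finally show ?thesis .
qed

lemma sum_lessThan_double:
  "(\<Sum>i<2 * (n::nat). f i) = (\<Sum>i<n. f i) + (\<Sum>i\<in>{n..<2 * n}. (f i :: real))"
proof -
  have "(\<Sum>i<2 * n. f i) = sum f ({..<n} \<union> {n..<2 * n})" by (rule sum.cong) auto
  also have "\<dots> = (\<Sum>i<n. f i) + (\<Sum>i\<in>{n..<2 * n}. f i)" by (rule sum.union_disjoint) auto
  finally show ?thesis .
qed

lemma cross_block_sum_le: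
  fixes y :: "nat \<Rightarrow> real"
  assumes p: "p < n" and q: "n \<le> q" "q < 2 * n"
  shows "(\<Sum>i<n. \<Sum>j\<in>{n..<2 * n}. (y i - y j)\<^sup>2)
    \<le> 3 * real n * (\<Sum>i<n. \<Sum>j<n. (y i - y j)\<^sup>2) + 3 * real n ^ 2 * (y p - y q)\<^sup>2
      + 3 * real n * (\<Sum>i\<in>{n..<2 * n}. \<Sum>j\<in>{n..<2 * n}. (y i - y j)\<^sup>2)"
proof -
  have first: "(\<Sum>i<n. (y i - y p)\<^sup>2) \<le> (\<Sum>i<n. \<Sum>j<n. (y i - y j)\<^sup>2)"
  proof (rule sum_mono)
    fix i assume "i \<in> {..<n}"
    show "(y i - y p)\<^sup>2 \<le> (\<Sum>j<n. (y i - y j)\<^sup>2)"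
      using p by (intro member_le_sum[of p "{..<n}" "\<lambda>j. (y i - y j)\<^sup>2"]) auto
  qed
  have second: "(\<Sum>j\<in>{n..<2 * n}. (y q - y j)\<^sup>2) \<le> (\<Sum>i\<in>{n..<2 * n}. \<Sum>j\<in>{n..<2 * n}. (y i - y j)\<^sup>2)"
    using q by (intro member_le_sum[of q "{n..<2 * n}" "\<lambda>i. \<Sum>j\<in>{n..<2 * n}. (y i - y j)\<^sup>2"])
      (auto intro: sum_nonneg)
  have "(\<Sum>i<n. \<Sum>j\<in>{n..<2 * n}. (y i - y j)\<^sup>2)
      \<le> 3 * real n * (\<Sum>i<n. (y i - y p)\<^sup>2) + 3 * real n ^ 2 * (y p - y q)\<^sup>2
        + 3 * real n * (\<Sum>j\<in>{n..<2 * n}. (y q - y j)\<^sup>2)"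
    using cross_sum_diff_squared_le[where I = "{..<n}" and J = "{n..<2 * n}" and a = p and b = q]
    by (simp add: power2_eq_square)
  thus ?thesis
    using mult_left_mono[OF first, of "3 * real n"] mult_left_mono[OF second, of "3 * real n"] by simp
qed

lemma two_blocks_variation_le:
  fixes y :: "nat \<Rightarrow> real"
  assumes n: "1 \<le> n" and p: "p < n" and q: "n \<le> q" "q < 2 * n"
  defines "Q1 \<equiv> \<Sum>i<n. \<Sum>j<n. (y i - y j)\<^sup>2"
    and "Q2 \<equiv> \<Sum>i\<in>{n..<2 * n}. \<Sum>j\<in>{n..<2 * n}. (y i - y j)\<^sup>2"
  shows "(\<Sum>i<2 * n. \<Sum>j<2 * n. (y i - y j)\<^sup>2)
    \<le> 3 * real n * (2 * real n - 1) * (Q1 + Q2 + 2 * (y p - y q)\<^sup>2)"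
proof -
  define C where "C = (\<Sum>i<n. \<Sum>j\<in>{n..<2 * n}. (y i - y j)\<^sup>2)"
  define d where "d = (y p - y q)\<^sup>2"
  define K where "K = 3 * real n * (2 * real n - 1)"
  have K: "K = 6 * (real n * real n) - 3 * real n" unfolding K_def by (simp add: algebra_simps)
  have n_real: "1 \<le> real n" using n by simp
  have Q: "0 \<le> Q1" "0 \<le> Q2" "0 \<le> d" unfolding Q1_def Q2_def d_def by (auto intro!: sum_nonneg)
  have "(\<Sum>i\<in>{n..<2 * n}. \<Sum>j<n. (y i - y j)\<^sup>2) = C"
    unfolding C_def by (subst sum.swap) (simp add: power2_commute)
  hence "(\<Sum>i<2 * n. \<Sum>j<2 * n. (y i - y j)\<^sup>2) = Q1 + Q2 + 2 * C"
    unfolding Q1_def Q2_def C_def by (simp add: sum_lessThan_double sum.distrib)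
  also have "\<dots> \<le> (6 * real n + 1) * (Q1 + Q2) + 6 * real n ^ 2 * d"
    using cross_block_sum_le[OF p q, of y] unfolding C_def Q1_def Q2_def d_def
    by (simp add: algebra_simps)
  also have "\<dots> \<le> K * (Q1 + Q2) + 2 * K * d"
  proof (rule add_mono)
    show "(6 * real n + 1) * (Q1 + Q2) \<le> K * (Q1 + Q2)"
    proof (cases "n = 1")
      case True
      hence "{..<n} = {0}" "{n..<2 * n} = {1}" by auto
      thus ?thesis unfolding Q1_def Q2_def by simp
    next
      case False
      hence "2 * real n \<le> real n * real n" using n by (intro mult_right_mono) auto
      hence "6 * real n + 1 \<le> K" using K n_real by linarith
      thus ?thesis using Q by (intro mult_right_mono) auto
    qed
    have "real n \<le> real n * real n" using mult_right_mono[OF n_real, of "real n"] by simp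
    hence "6 * real n ^ 2 \<le> 2 * K" using K by (simp add: power2_eq_square)
    thus "6 * real n ^ 2 * d \<le> 2 * K * d" using Q by (intro mult_right_mono) auto
  qed
  also have "\<dots> = K * (Q1 + Q2 + 2 * d)" by (simp add: algebra_simps)
  finally show ?thesis unfolding K_def d_def .
qed

context
  fixes n :: nat and F :: "(nat \<times> nat) set"
  assumes F: "F \<subseteq> {0..<n} \<times> {n..<2 * n}"
begin

lemma D_adj_irrefl: "\<not> D_adj n F i i"
  using F unfolding D_adj_def by auto

lemma D_adj_sym: "D_adj n F i j = D_adj n F j i"
  unfolding D_adj_def by auto

lemma D_adj_first_clique: "i < n \<Longrightarrow> j < n \<Longrightarrow> D_adj n F i j \<longleftrightarrow> i \<noteq> j"
  using F unfolding D_adj_def by auto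

lemma D_adj_second_clique: "n \<le> i \<Longrightarrow> i < 2 * n \<Longrightarrow> n \<le> j \<Longrightarrow> j < 2 * n \<Longrightarrow> D_adj n F i j \<longleftrightarrow> i \<noteq> j"
  using F unfolding D_adj_def by auto

lemma D_adj_between: "i < n \<Longrightarrow> n \<le> j \<Longrightarrow> D_adj n F i j \<longleftrightarrow> (i, j) \<in> F"
  using F unfolding D_adj_def by auto

lemma D_laplacian_form_two_valued:
  fixes a b :: real
  defines "y \<equiv> vec (2 * n) (\<lambda>i. if i < n then a + b else a - b)"
  shows "y \<bullet> (laplacian (2 * n) (D_adj n F) *\<^sub>v y) = 4 * real (card F) * b\<^sup>2"
    and "y \<bullet> y = 2 * real n * (a\<^sup>2 + b\<^sup>2)"
proof -
  let ?E = "D_adj n F" and ?F2 = "F \<union> converse F"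
  have y: "y \<in> carrier_vec (2 * n)" unfolding y_def by simp
  have edge_term: "(if ?E i j then (y $ i - y $ j)\<^sup>2 else 0) = (if (i, j) \<in> ?F2 then 4 * b\<^sup>2 else 0)"
    if "i < 2 * n" "j < 2 * n" for i j
    using that F D_adj_between[of i j] D_adj_between[of j i] D_adj_sym[of i j]
    unfolding y_def by (cases "i < n"; cases "j < n") (auto simp: power2_eq_square)
  have "2 * (y \<bullet> (laplacian (2 * n) ?E *\<^sub>v y))
      = (\<Sum>i<2 * n. \<Sum>j<2 * n. if (i, j) \<in> ?F2 then 4 * b\<^sup>2 else 0)"
    unfolding laplacian_quadratic_form[OF D_adj_irrefl D_adj_sym y] using edge_term
    by (intro sum.cong refl) auto
  also have "\<dots> = (\<Sum>e\<in>{..<2 * n} \<times> {..<2 * n}. if e \<in> ?F2 then 4 * b\<^sup>2 else 0)"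
    by (subst sum.cartesian_product) (auto intro!: sum.cong simp: case_prod_unfold)
  also have "\<dots> = (\<Sum>e\<in>{e \<in> {..<2 * n} \<times> {..<2 * n}. e \<in> ?F2}. 4 * b\<^sup>2)"
    by (rule sum.inter_filter[symmetric]) simp
  also have "{e \<in> {..<2 * n} \<times> {..<2 * n}. e \<in> ?F2} = ?F2" using F by auto
  also have "(\<Sum>e\<in>?F2. 4 * b\<^sup>2) = 4 * b\<^sup>2 * real (card ?F2)" by simp
  also have "card ?F2 = 2 * card F"
  proof -
    have "finite F" using F by (rule finite_subset) auto
    moreover have "F \<inter> converse F = {}"
    proof (rule equals0I)
      fix e assume "e \<in> F \<inter> converse F"
      then obtain i j where "(i, j) \<in> F" "(j, i) \<in> F" by auto
      hence "j < n" "n \<le> j" using F by auto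
      thus False by simp
    qed
    ultimately show ?thesis by (simp add: card_Un_disjoint)
  qed
  finally show "y \<bullet> (laplacian (2 * n) ?E *\<^sub>v y) = 4 * real (card F) * b\<^sup>2" by simp
  have "y \<bullet> y = (\<Sum>i<n. (a + b)\<^sup>2) + (\<Sum>i\<in>{n..<2 * n}. (a - b)\<^sup>2)"
    unfolding y_def by (simp add: scalar_prod_def lessThan_atLeast0[symmetric] sum_lessThan_double
        power2_eq_square)
  thus "y \<bullet> y = 2 * real n * (a\<^sup>2 + b\<^sup>2)" by (simp add: power2_eq_square algebra_simps)
qed

lemma D_laplacian_form_ge_blocks:
  assumes pq: "(p, q) \<in> F" and y: "y \<in> carrier_vec (2 * n)"
  shows "(\<Sum>i<n. \<Sum>j<n. (y $ i - y $ j)\<^sup>2) + (\<Sum>i\<in>{n..<2 * n}. \<Sum>j\<in>{n..<2 * n}. (y $ i - y $ j)\<^sup>2)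
      + 2 * (y $ p - y $ q)\<^sup>2 \<le> 2 * (y \<bullet> (laplacian (2 * n) (D_adj n F) *\<^sub>v y))"
proof -
  define g where "g i j = (if D_adj n F i j then (y $ i - y $ j)\<^sup>2 else 0)" for i j
  have p: "p < n" and q: "n \<le> q" "q < 2 * n" using pq F by auto
  have g_nonneg: "0 \<le> g i j" for i j unfolding g_def by simp
  have "(\<Sum>i<n. \<Sum>j<n. g i j) = (\<Sum>i<n. \<Sum>j<n. (y $ i - y $ j)\<^sup>2)"
    unfolding g_def by (intro sum.cong refl) (auto simp: D_adj_first_clique)
  moreover have "(\<Sum>i\<in>{n..<2 * n}. \<Sum>j\<in>{n..<2 * n}. g i j)
      = (\<Sum>i\<in>{n..<2 * n}. \<Sum>j\<in>{n..<2 * n}. (y $ i - y $ j)\<^sup>2)"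
    unfolding g_def by (intro sum.cong refl) (auto simp: D_adj_second_clique)
  moreover have "(y $ p - y $ q)\<^sup>2 \<le> (\<Sum>i<n. \<Sum>j\<in>{n..<2 * n}. g i j)"
  proof -
    have "(y $ p - y $ q)\<^sup>2 = g p q" unfolding g_def using pq p q D_adj_between by simp
    also have "\<dots> \<le> (\<Sum>j\<in>{n..<2 * n}. g p j)"
      using q g_nonneg by (intro member_le_sum[of q "{n..<2 * n}" "g p"]) auto
    also have "\<dots> \<le> (\<Sum>i<n. \<Sum>j\<in>{n..<2 * n}. g i j)"
      using p g_nonneg by (intro member_le_sum[of p "{..<n}" "\<lambda>i. \<Sum>j\<in>{n..<2 * n}. g i j"])
        (auto intro: sum_nonneg)
    finally show ?thesis .
  qed
  moreover have "(y $ p - y $ q)\<^sup>2 \<le> (\<Sum>i\<in>{n..<2 * n}. \<Sum>j<n. g i j)"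
  proof -
    have "(y $ p - y $ q)\<^sup>2 = g q p"
      unfolding g_def using pq p q D_adj_between D_adj_sym by (simp add: power2_commute)
    also have "\<dots> \<le> (\<Sum>j<n. g q j)"
      using p g_nonneg by (intro member_le_sum[of p "{..<n}" "g q"]) auto
    also have "\<dots> \<le> (\<Sum>i\<in>{n..<2 * n}. \<Sum>j<n. g i j)"
      using q g_nonneg by (intro member_le_sum[of q "{n..<2 * n}" "\<lambda>i. \<Sum>j<n. g i j"])
        (auto intro: sum_nonneg)
    finally show ?thesis .
  qed
  moreover have "2 * (y \<bullet> (laplacian (2 * n) (D_adj n F) *\<^sub>v y)) = (\<Sum>i<2 * n. \<Sum>j<2 * n. g i j)"
    unfolding g_def by (rule laplacian_quadratic_form[OF D_adj_irrefl D_adj_sym y])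
  ultimately show ?thesis by (simp add: sum_lessThan_double sum.distrib)
qed

lemma D_laplacian_form_lower:
  assumes n: "1 \<le> n" and pq: "(p, q) \<in> F" and y: "y \<in> carrier_vec (2 * n)"
    and sum_0: "(\<Sum>i<2 * n. y $ i) = 0"
  shows "2 / (3 * (2 * real n - 1)) * (y \<bullet> y) \<le> y \<bullet> (laplacian (2 * n) (D_adj n F) *\<^sub>v y)"
proof -
  define M where "M = 3 * (2 * real n - 1)"
  define Y where "Y = y \<bullet> (laplacian (2 * n) (D_adj n F) *\<^sub>v y)"
  have M: "0 < M" unfolding M_def using n by simp
  have p: "p < n" and q: "n \<le> q" "q < 2 * n" using pq F by auto
  have "real n * (4 * (y \<bullet> y)) = (\<Sum>i<2 * n. \<Sum>j<2 * n. (y $ i - y $ j)\<^sup>2)"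
    using sum_sum_diff_squared[where N = "2 * n" and y = "\<lambda>i. y $ i"] y sum_0
    by (simp add: scalar_prod_def lessThan_atLeast0 power2_eq_square)
  also have "\<dots> \<le> real n * (M * ((\<Sum>i<n. \<Sum>j<n. (y $ i - y $ j)\<^sup>2)
      + (\<Sum>i\<in>{n..<2 * n}. \<Sum>j\<in>{n..<2 * n}. (y $ i - y $ j)\<^sup>2) + 2 * (y $ p - y $ q)\<^sup>2))"
    using two_blocks_variation_le[OF n p q, of "\<lambda>i. y $ i"] unfolding M_def by (simp add: mult_ac)
  also have "\<dots> \<le> real n * (M * (2 * Y))"
    using D_laplacian_form_ge_blocks[OF pq y] M unfolding Y_def by (intro mult_left_mono) auto
  finally have "4 * (y \<bullet> y) \<le> 2 * (M * Y)" using n by (simp add: mult.left_commute)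
  thus ?thesis using M unfolding M_def[symmetric] Y_def[symmetric] by (simp add: field_simps)
qed

lemma D_laplacian_symmetric: "transpose_mat (laplacian (2 * n) (D_adj n F)) = laplacian (2 * n) (D_adj n F)"
  by (rule transpose_laplacian) (rule D_adj_sym)

lemma lambda2_D_lower:
  assumes n: "1 \<le> n" and "F \<noteq> {}"
  shows "2 / (3 * (2 * real n - 1)) \<le> lambda2 (2 * n) (D_adj n F)"
  unfolding lambda2_def
proof (rule second_eigenvalue_ge[OF laplacian_carrier(1) D_laplacian_symmetric,
      where w = "vec (2 * n) (\<lambda>_. 1)"])
  obtain p q where pq: "(p, q) \<in> F" using \<open>F \<noteq> {}\<close> by auto
  fix y :: "real vec" assume "y \<in> carrier_vec (2 * n)" "y \<bullet> vec (2 * n) (\<lambda>_. 1) = 0"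
  thus "2 / (3 * (2 * real n - 1)) * (y \<bullet> y) \<le> y \<bullet> (laplacian (2 * n) (D_adj n F) *\<^sub>v y)"
    using D_laplacian_form_lower[OF n pq] by (simp add: scalar_prod_def lessThan_atLeast0)
qed (use n in simp_all)

lemma lambda2_D_upper:
  assumes n: "1 \<le> n"
  shows "lambda2 (2 * n) (D_adj n F) \<le> 2 * real (card F) / real n"
proof -
  define ones where "ones = vec (2 * n) (\<lambda>_. 1 :: real)"
  define signs where "signs = vec (2 * n) (\<lambda>i. if i < n then 1 else -1 :: real)"
  have y: "a \<cdot>\<^sub>v ones + b \<cdot>\<^sub>v signs = vec (2 * n) (\<lambda>i. if i < n then a + b else a - b)" for a b
    unfolding ones_def signs_def by (intro eq_vecI) auto
  have indep: "a = 0 \<and> b = 0" if "a \<cdot>\<^sub>v ones + b \<cdot>\<^sub>v signs = 0\<^sub>v (2 * n)" for a b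
  proof -
    have "(a \<cdot>\<^sub>v ones + b \<cdot>\<^sub>v signs) $ 0 = 0" "(a \<cdot>\<^sub>v ones + b \<cdot>\<^sub>v signs) $ n = 0"
      using that n by auto
    hence "a + b = 0" "a - b = 0" using n unfolding y by auto
    thus ?thesis by simp
  qed
  have form: "(a \<cdot>\<^sub>v ones + b \<cdot>\<^sub>v signs) \<bullet> (laplacian (2 * n) (D_adj n F) *\<^sub>v (a \<cdot>\<^sub>v ones + b \<cdot>\<^sub>v signs))
      \<le> 2 * real (card F) / real n * ((a \<cdot>\<^sub>v ones + b \<cdot>\<^sub>v signs) \<bullet> (a \<cdot>\<^sub>v ones + b \<cdot>\<^sub>v signs))"
    for a b
  proof -
    have "4 * real (card F) * b\<^sup>2 \<le> 4 * real (card F) * (a\<^sup>2 + b\<^sup>2)" by (intro mult_left_mono) auto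
    also have "\<dots> = 2 * real (card F) / real n * (2 * real n * (a\<^sup>2 + b\<^sup>2))"
      using n by (simp add: field_simps)
    finally show ?thesis unfolding y D_laplacian_form_two_valued .
  qed
  show ?thesis unfolding lambda2_def
    by (rule second_eigenvalue_le[OF laplacian_carrier(1) D_laplacian_symmetric _ _ indep form])
      (simp_all add: ones_def signs_def)
qed

end

theorem theorem4p2:
  fixes n k :: nat and F :: "(nat \<times> nat) set"
  assumes "1 \<le> n" and "1 \<le> k" and "k \<le> n"
    and "F \<subseteq> {0..<n} \<times> {n..<2*n}" and "card F = k"
  shows "card (D_vertices n) = 2 * n
    \<and> 2 / (3 * (2 * real n - 1)) \<le> lambda2 (2*n) (D_adj n F)
    \<and> lambda2 (2*n) (D_adj n F) \<le> 2 * real k / real n"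
proof -
  have "F \<noteq> {}" using assms(2,5) by auto
  thus ?thesis
    using lambda2_D_lower[OF assms(4,1)] lambda2_D_upper[OF assms(4,1)] assms(5)
    by (simp add: D_vertices_def)
qed

end
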